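(* Let $G=(X,\Sigma,\longrightarrow,X_0)$ and $R=(Z,\Sigma,\longrightarrow,Z_0)$ be automata. (1) For any $E\subseteq\wp(X\times Z)$, $E$ is a $\Sigma_{ucr}$-controllability set from $G$ to $R$ iff $F_{(G,R)}(E)=E$ and there exists $W_0\in E$ such that $\forall x_0\in X_0\,\exists z_0\in Z_0\,((x_0,z_0)\in W_0)$. (2) There exists a $\Sigma_{ucr}$-controllability set from $G$ to $R$ iff there exists $W_0\in E^{\uparrow}_{(G,R)}$ such that $\forall x_0\in X_0\,\exists z_0\in Z_0\,((x_0,z_0)\in W_0)$.
   Context: An automaton is a 4-tuple $A=(Q,\Sigma,\longrightarrow,Q_0)$ with state set $Q$, finite event set $\Sigma$, ${\longrightarrow}\subseteq Q\times\Sigma\times Q$ and $\emptyset\neq Q_0\subseteq Q$; write $q\xrightarrow{\sigma}q'$ for $(q,\sigma,q')\in{\longrightarrow}$. Events are partitioned into uncontrollable $\Sigma_{uc}$ and controllable $\Sigma_c$; $\Sigma_r\subseteq\Sigma$ is a fixed set of required events. For $W,W'\subseteq X\times Z$: $\mathit{match}_{G,R}(W,\sigma,W')$ iff for all $(x,z)\in W$ and $x\xrightarrow{\sigma}x'$ there is $z'$ with $z\xrightarrow{\sigma}z'$ and $(x',z')\in W'$. $E\subseteq\wp(X\times Z)$ is a $\Sigma_{ucr}$-controllability set from $G$ to $R$ if: (istate) some $W_0\in E$ satisfies $\forall x_0\in X_0\,\exists z_0\in Z_0\,((x_0,z_0)\in W_0)$; (a) for every $W\in E$, $\sigma\in\Sigma_{uc}$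 there is $W'\in E$ with $\mathit{match}_{G,R}(W,\sigma,W')$; (b) for every $W\in E$, $(x,z)\in W$, $\sigma\in\Sigma_r$, $z\xrightarrow{\sigma}z'$, there exist $x'$, $W'\in E$ with $x\xrightarrow{\sigma}x'$, $(x',z')\in W'$, $\mathit{match}_{G,R}(W,\sigma,W')$. $F_{(G,R)}:\wp(\wp(X\times Z))\to\wp(\wp(X\times Z))$ is defined by: $W\in F_{(G,R)}(E)$ iff $W\in E$ and (1) for every $\sigma\in\Sigma_{uc}$ there is $W'\in E$ with $\mathit{match}_{G,R}(W,\sigma,W')$, and (2) for every $(x,z)\in W$, $\sigma\in\Sigma_r$, $z'$ with $z\xrightarrow{\sigma}z'$ there exist $x'\in X$, $W'\in E$ with $x\xrightarrow{\sigma}x'$, $(x',z')\in W'$ and $\mathit{match}_{G,R}(W,\sigma,W')$. $F_{(G,R)}$ is monotone w.r.t. $\subseteq$, and $E^{\uparrow}_{(G,R)}$ denotes its greatest fixpoint. *)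

theory Defs
  imports Main
begin

type_synonym ('q,'e) automaton = "'q set \<times> 'e set \<times> ('q \<times> 'e \<times> 'q) set \<times> 'q set"

definition states :: "('q,'e) automaton \<Rightarrow> 'q set" where "states A = fst A"
definition events :: "('q,'e) automaton \<Rightarrow> 'e set" where "events A = fst (snd A)"
definition trans :: "('q,'e) automaton \<Rightarrow> ('q \<times> 'e \<times> 'q) set" where "trans A = fst (snd (snd A))"
definition init :: "('q,'e) automaton \<Rightarrow> 'q set" where "init A = snd (snd (snd A))"

definition is_automaton :: "('q,'e) automaton \<Rightarrow> bool" where
  "is_automaton A \<longleftrightarrow> finite (events A) \<and>
     trans A \<subseteq> states A \<times> events A \<times> states A \<and>
     init A \<noteq> {} \<and> init A \<subseteq> states A"

definition match :: "('x,'e) automaton \<Rightarrow> ('z,'e) automaton \<Rightarrow> ('x \<times> 'z) set \<Rightarrow> 'e \<Rightarrow> ('x \<times> 'z) set \<Rightarrow> bool" where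
  "match G R W \<sigma> W' \<longleftrightarrow>
     (\<forall>(x,z)\<in>W. \<forall>x'. (x,\<sigma>,x') \<in> trans G \<longrightarrow> (\<exists>z'. (z,\<sigma>,z') \<in> trans R \<and> (x',z') \<in> W'))"

definition init_cond :: "('x,'e) automaton \<Rightarrow> ('z,'e) automaton \<Rightarrow> ('x \<times> 'z) set \<Rightarrow> bool" where
  "init_cond G R W0 \<longleftrightarrow> (\<forall>x0\<in>init G. \<exists>z0\<in>init R. (x0,z0) \<in> W0)"

text \<open>Sigma_ucr-controllability set from G to R (Sig_uc: uncontrollable events, Sig_r: required events).\<close>
definition ucr_controllability_set ::
  "'e set \<Rightarrow> 'e set \<Rightarrow> ('x,'e) automaton \<Rightarrow> ('z,'e) automaton \<Rightarrow> ('x \<times> 'z) set set \<Rightarrow> bool" where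
  "ucr_controllability_set Sig_uc Sig_r G R E \<longleftrightarrow>
     E \<subseteq> Pow (states G \<times> states R) \<and>
     (\<exists>W0\<in>E. init_cond G R W0) \<and>
     (\<forall>W\<in>E. \<forall>\<sigma>\<in>Sig_uc. \<exists>W'\<in>E. match G R W \<sigma> W') \<and>
     (\<forall>W\<in>E. \<forall>(x,z)\<in>W. \<forall>\<sigma>\<in>Sig_r. \<forall>z'. (z,\<sigma>,z') \<in> trans R \<longrightarrow>
        (\<exists>x'. \<exists>W'\<in>E. (x,\<sigma>,x') \<in> trans G \<and> (x',z') \<in> W' \<and> match G R W \<sigma> W'))"

definition F_op ::
  "'e set \<Rightarrow> 'e set \<Rightarrow> ('x,'e) automaton \<Rightarrow> ('z,'e) automaton \<Rightarrow> ('x \<times> 'z) set set \<Rightarrow> ('x \<times> 'z) set set" where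
  "F_op Sig_uc Sig_r G R E = {W. W \<in> E \<and>
     (\<forall>\<sigma>\<in>Sig_uc. \<exists>W'\<in>E. match G R W \<sigma> W') \<and>
     (\<forall>(x,z)\<in>W. \<forall>\<sigma>\<in>Sig_r. \<forall>z'. (z,\<sigma>,z') \<in> trans R \<longrightarrow>
        (\<exists>x'. \<exists>W'\<in>E. (x,\<sigma>,x') \<in> trans G \<and> (x',z') \<in> W' \<and> match G R W \<sigma> W'))}"

definition E_up ::
  "'e set \<Rightarrow> 'e set \<Rightarrow> ('x,'e) automaton \<Rightarrow> ('z,'e) automaton \<Rightarrow> ('x \<times> 'z) set set" where
  "E_up Sig_uc Sig_r G R = gfp (\<lambda>E. F_op Sig_uc Sig_r G R E \<inter> Pow (states G \<times> states R))"

end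

theory Submission
  imports Defs
begin

text \<open>Conditions (a) and (b) of a controllability set say exactly that every member of E
  survives one application of F, i.e. that E is a post-fixpoint of F. Since F is deflationary,
  post-fixpoints are fixpoints, and since F is monotone, the post-fixpoints inside
  Pow (X \<times> Z) are precisely the subsets of the greatest fixpoint.\<close>

lemma F_op_subset: "F_op Sig_uc Sig_r G R E \<subseteq> E"
  unfolding F_op_def by blast

lemma mono_F_op: "mono (F_op Sig_uc Sig_r G R)"
  unfolding mono_def F_op_def by blast

lemma ucr_controllability_set_iff_post_fixpoint:
  "ucr_controllability_set Sig_uc Sig_r G R E \<longleftrightarrow>
     E \<subseteq> Pow (states G \<times> states R) \<and> E \<subseteq> F_op Sig_uc Sig_r G R E \<and>
     (\<exists>W0\<in>E. init_cond G R W0)"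
  unfolding ucr_controllability_set_def F_op_def by blast

lemma ucr_controllability_set_iff_fixpoint:
  assumes "E \<subseteq> Pow (states G \<times> states R)"
  shows "ucr_controllability_set Sig_uc Sig_r G R E \<longleftrightarrow>
           F_op Sig_uc Sig_r G R E = E \<and> (\<exists>W0\<in>E. init_cond G R W0)"
  using assms F_op_subset[of Sig_uc Sig_r G R E]
  by (auto simp: ucr_controllability_set_iff_post_fixpoint)

lemma E_up_unfold:
  "E_up Sig_uc Sig_r G R =
     F_op Sig_uc Sig_r G R (E_up Sig_uc Sig_r G R) \<inter> Pow (states G \<times> states R)"
proof -
  have "mono (\<lambda>E. F_op Sig_uc Sig_r G R E \<inter> Pow (states G \<times> states R))"
    using mono_F_op[of Sig_uc Sig_r G R] by (auto simp: mono_def)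
  then show ?thesis
    unfolding E_up_def by (rule gfp_unfold)
qed

lemma ucr_controllability_set_subset_E_up:
  assumes "ucr_controllability_set Sig_uc Sig_r G R E"
  shows "E \<subseteq> E_up Sig_uc Sig_r G R"
  unfolding E_up_def
  by (rule gfp_upperbound) (use assms in \<open>auto simp: ucr_controllability_set_iff_post_fixpoint\<close>)

lemma ucr_controllability_set_E_up:
  assumes "\<exists>W0\<in>E_up Sig_uc Sig_r G R. init_cond G R W0"
  shows "ucr_controllability_set Sig_uc Sig_r G R (E_up Sig_uc Sig_r G R)"
  using assms E_up_unfold[of Sig_uc Sig_r G R]
  by (simp add: ucr_controllability_set_iff_post_fixpoint) blast

theorem proposition1:
  fixes G :: "('x,'e) automaton" and R :: "('z,'e) automaton"
    and Sig_uc Sig_c Sig_r :: "'e set"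
  assumes "is_automaton G" and "is_automaton R"
    and "events G = events R"
    and "Sig_uc \<union> Sig_c = events G" and "Sig_uc \<inter> Sig_c = {}"
    and "Sig_r \<subseteq> events G"
  shows "(\<forall>E. E \<subseteq> Pow (states G \<times> states R) \<longrightarrow>
            (ucr_controllability_set Sig_uc Sig_r G R E \<longleftrightarrow>
              F_op Sig_uc Sig_r G R E = E \<and> (\<exists>W0\<in>E. init_cond G R W0)))
       \<and> ((\<exists>E. ucr_controllability_set Sig_uc Sig_r G R E) \<longleftrightarrow>
            (\<exists>W0\<in>E_up Sig_uc Sig_r G R. init_cond G R W0))"
proof (intro conjI allI impI)
  fix E :: "('x \<times> 'z) set set"
  assume "E \<subseteq> Pow (states G \<times> states R)"
  then show "ucr_controllability_set Sig_uc Sig_r G R E \<longleftrightarrow>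
               F_op Sig_uc Sig_r G R E = E \<and> (\<exists>W0\<in>E. init_cond G R W0)"
    by (rule ucr_controllability_set_iff_fixpoint)
next
  show "(\<exists>E. ucr_controllability_set Sig_uc Sig_r G R E) \<longleftrightarrow>
          (\<exists>W0\<in>E_up Sig_uc Sig_r G R. init_cond G R W0)"
  proof
    assume "\<exists>E. ucr_controllability_set Sig_uc Sig_r G R E"
    then obtain E where E: "ucr_controllability_set Sig_uc Sig_r G R E" ..
    then obtain W0 where "W0 \<in> E" "init_cond G R W0"
      by (auto simp: ucr_controllability_set_def)
    with ucr_controllability_set_subset_E_up[OF E]
    show "\<exists>W0\<in>E_up Sig_uc Sig_r G R. init_cond G R W0" by blast
  next
    assume "\<exists>W0\<in>E_up Sig_uc Sig_r G R. init_cond G R W0"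
    then show "\<exists>E. ucr_controllability_set Sig_uc Sig_r G R E"
      by (blast intro: ucr_controllability_set_E_up)
  qed
qed

end
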